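(* Let $d\ge2$, $L\ge2$, $\sigma>0$, and $\lambda\in\,]0,\lambda^\star(\sigma,L)]$. Let $\mathcal{R}^<(\kappa_0,\kappa_1)=A(\kappa_0^4+\kappa_1^4)+B(\kappa_0^2+\kappa_1^2)+C\kappa_0^2\kappa_1^2+D$ on $[-1,1]^2$. Then every $(\kappa_0,\kappa_1)\in[-1,1]^2$ satisfying $$(1-\kappa_0^2)\,\partial_{\kappa_0}\mathcal{R}^<(\kappa_0,\kappa_1)=0,\qquad(1-\kappa_1^2)\,\partial_{\kappa_1}\mathcal{R}^<(\kappa_0,\kappa_1)=0$$ belongs to the set $\{(\pm1,\pm1),(0,\pm1),(\pm1,0),(0,0)\}$.
   Context: With $c_1(n)=1+n\sigma^2$, $c_2(n)=1+\sigma^2(d+n)$: $A=\frac{2\lambda^2}{L^2}c_2(8)+\frac{2\lambda^2(L-1)}{L^2}c_1(5)+\frac{\lambda^2(L-1)}{L^2}c_2(4)+\frac{\lambda^2(L-1)(L-2)}{2L^2}c_1(4)$, $B=-\frac{2\lambda}{L}c_2(4)+\frac{16\lambda^2\sigma^2}{L^2}c_2(6)+\frac{8\lambda^2\sigma^2(L-1)}{L^2}c_1(6)-\frac{\lambda(L-1)}{L}c_1(4)+\frac{4\lambda^2\sigma^2(L-1)}{L^2}c_2(3)+\frac{\lambda^2\sigma^2(L-1)(L-2)}{L^2}c_1(6)$, $C=\frac{4\lambda^2\sigma^2(L-1)}{L^2}$, $D$ a constant not affecting the derivatives. $c_3(\sigma,L)=16\sigma^2c_2(6)+8\sigma^2(L-1)c_1(6)+4\sigma^2(L-1)c_2(3)+\sigma^2(L-1)(L-2)c_1(6)+4c_2(8)+4(L-1)c_1(5)+2(L-1)c_2(4)+(L-1)(L-2)c_1(4)+4\sigma^2(L-1)$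 and $\lambda^\star(\sigma,L)=\frac{2Lc_2(4)+L(L-1)c_1(4)}{c_3(\sigma,L)}$. *)

theory Defs
  imports "HOL-Analysis.Analysis"
begin

definition c1 :: "real \<Rightarrow> real \<Rightarrow> real" where
  "c1 \<sigma> n = 1 + n * \<sigma>^2"

definition c2 :: "real \<Rightarrow> real \<Rightarrow> real \<Rightarrow> real" where
  "c2 \<sigma> d n = 1 + \<sigma>^2 * (d + n)"

definition coefA :: "real \<Rightarrow> real \<Rightarrow> real \<Rightarrow> real \<Rightarrow> real" where
  "coefA \<sigma> d L lam =
     2*lam^2/L^2 * c2 \<sigma> d 8 + 2*lam^2*(L-1)/L^2 * c1 \<sigma> 5
   + lam^2*(L-1)/L^2 * c2 \<sigma> d 4 + lam^2*(L-1)*(L-2)/(2*L^2) * c1 \<sigma> 4"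

definition coefB :: "real \<Rightarrow> real \<Rightarrow> real \<Rightarrow> real \<Rightarrow> real" where
  "coefB \<sigma> d L lam =
     - 2*lam/L * c2 \<sigma> d 4 + 16*lam^2*\<sigma>^2/L^2 * c2 \<sigma> d 6
   + 8*lam^2*\<sigma>^2*(L-1)/L^2 * c1 \<sigma> 6 - lam*(L-1)/L * c1 \<sigma> 4
   + 4*lam^2*\<sigma>^2*(L-1)/L^2 * c2 \<sigma> d 3
   + lam^2*\<sigma>^2*(L-1)*(L-2)/L^2 * c1 \<sigma> 6"

definition coefC :: "real \<Rightarrow> real \<Rightarrow> real \<Rightarrow> real" where
  "coefC \<sigma> L lam = 4*lam^2*\<sigma>^2*(L-1)/L^2"

definition c3 :: "real \<Rightarrow> real \<Rightarrow> real \<Rightarrow> real" where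
  "c3 \<sigma> d L =
     16*\<sigma>^2 * c2 \<sigma> d 6 + 8*\<sigma>^2*(L-1) * c1 \<sigma> 6 + 4*\<sigma>^2*(L-1) * c2 \<sigma> d 3
   + \<sigma>^2*(L-1)*(L-2) * c1 \<sigma> 6 + 4 * c2 \<sigma> d 8 + 4*(L-1) * c1 \<sigma> 5
   + 2*(L-1) * c2 \<sigma> d 4 + (L-1)*(L-2) * c1 \<sigma> 4 + 4*\<sigma>^2*(L-1)"

definition lambda_star :: "real \<Rightarrow> real \<Rightarrow> real \<Rightarrow> real" where
  "lambda_star \<sigma> d L = (2*L * c2 \<sigma> d 4 + L*(L-1) * c1 \<sigma> 4) / c3 \<sigma> d L"

definition Rlt :: "real \<Rightarrow> real \<Rightarrow> real \<Rightarrow> real \<Rightarrow> real \<Rightarrow> real \<Rightarrow> real \<Rightarrow> real" where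
  "Rlt \<sigma> d L lam D k0 k1 =
     coefA \<sigma> d L lam * (k0^4 + k1^4) + coefB \<sigma> d L lam * (k0^2 + k1^2)
   + coefC \<sigma> L lam * k0^2 * k1^2 + D"

end

theory Submission
  imports Defs
begin

text \<open>The partial derivative of \<open>Rlt\<close> in \<open>\<kappa>\<^sub>0\<close> is
  \<open>2\<kappa>\<^sub>0(2A\<kappa>\<^sub>0\<^sup>2 + B + C\<kappa>\<^sub>1\<^sup>2)\<close>, and symmetrically in \<open>\<kappa>\<^sub>1\<close>. Here \<open>A > 0\<close>,
  \<open>C \<ge> 0\<close>, and \<open>2A + B + C = \<lambda>/L\<^sup>2 \<cdot> (\<lambda> c\<^sub>3 - L(2c\<^sub>2(4) + (L-1)c\<^sub>1(4)))\<close>, which is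
  \<open>\<le> 0\<close> exactly when \<open>\<lambda> \<le> \<lambda>\<^sup>\<star>\<close>. So for \<open>|\<kappa>\<^sub>0| < 1\<close> the bracket is strictly
  below its value \<open>2A + B + C \<le> 0\<close> at \<open>\<kappa>\<^sub>0\<^sup>2 = \<kappa>\<^sub>1\<^sup>2 = 1\<close>; hence a critical
  coordinate is \<open>0\<close> or \<open>\<plusminus>1\<close>.\<close>

lemma quartic_critical_coordinate:
  fixes A B C x y :: real
  assumes "0 < A" "0 \<le> C" "2*A + B + C \<le> 0" "\<bar>x\<bar> \<le> 1" "\<bar>y\<bar> \<le> 1"
    and "(1 - x^2) * (2*x*(2*A*x^2 + B + C*y^2)) = 0"
  shows "x \<in> {-1, 0, 1}"
proof (rule ccontr)
  assume "x \<notin> {-1, 0, 1}"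
  then have "\<bar>x\<bar> < 1" "x \<noteq> 0" using assms(4) by auto
  then have "x^2 < 1" "1 - x^2 \<noteq> 0" by (auto simp: abs_square_less_1 power2_eq_1_iff)
  moreover have "y^2 \<le> 1" using assms(5) by (simp add: abs_square_le_1)
  ultimately have "2*A*x^2 < 2*A" "C*y^2 \<le> C"
    using assms(1,2) by (simp_all add: mult_left_le)
  then have "2*A*x^2 + B + C*y^2 < 0" using assms(3) by linarith
  with assms(6) \<open>x \<noteq> 0\<close> \<open>1 - x^2 \<noteq> 0\<close> show False by simp
qed

lemma Rlt_swap: "Rlt \<sigma> d L lam D k1 k0 = Rlt \<sigma> d L lam D k0 k1"
  unfolding Rlt_def by (simp add: algebra_simps)

lemma Rlt_has_real_derivative_fst:
  "((\<lambda>x. Rlt \<sigma> d L lam D x y) has_real_derivative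
      2*x*(2*coefA \<sigma> d L lam*x^2 + coefB \<sigma> d L lam + coefC \<sigma> L lam*y^2)) (at x)"
  unfolding Rlt_def
  by (rule derivative_eq_intros refl | simp)+
     (simp add: algebra_simps power2_eq_square power3_eq_cube)

lemma deriv_Rlt_fst:
  "deriv (\<lambda>x. Rlt \<sigma> d L lam D x y) x
     = 2*x*(2*coefA \<sigma> d L lam*x^2 + coefB \<sigma> d L lam + coefC \<sigma> L lam*y^2)"
  by (rule DERIV_imp_deriv[OF Rlt_has_real_derivative_fst])

lemma deriv_Rlt_snd:
  "deriv (\<lambda>y. Rlt \<sigma> d L lam D x y) y
     = 2*y*(2*coefA \<sigma> d L lam*y^2 + coefB \<sigma> d L lam + coefC \<sigma> L lam*x^2)"
  using deriv_Rlt_fst[of \<sigma> d L lam D x y] by (simp add: Rlt_swap)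

lemma c1_pos: "0 \<le> n \<Longrightarrow> 0 < c1 \<sigma> n"
  unfolding c1_def by (simp add: add_pos_nonneg)

lemma c2_pos: "0 \<le> d + n \<Longrightarrow> 0 < c2 \<sigma> d n"
  unfolding c2_def by (simp add: add_pos_nonneg)

lemma c3_pos:
  assumes "0 \<le> d" "2 \<le> L"
  shows "0 < c3 \<sigma> d L"
  unfolding c3_def using assms c1_pos[THEN less_imp_le] c2_pos[THEN less_imp_le] c2_pos[of d 8]
  by (intro add_nonneg_pos[of "_ + _"] add_pos_nonneg add_nonneg_nonneg mult_nonneg_nonneg) auto

lemma coefA_pos:
  assumes "0 \<le> d" "2 \<le> L" "lam \<noteq> 0"
  shows "0 < coefA \<sigma> d L lam"
  unfolding coefA_def using assms c1_pos[THEN less_imp_le] c2_pos[THEN less_imp_le] c2_pos[of d 8]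
  by (intro add_pos_nonneg mult_pos_pos divide_pos_pos mult_nonneg_nonneg divide_nonneg_nonneg) auto

lemma coefC_nonneg: "1 \<le> L \<Longrightarrow> 0 \<le> coefC \<sigma> L lam"
  unfolding coefC_def by simp

lemma coef_sum_eq:
  assumes "L \<noteq> 0"
  shows "2*coefA \<sigma> d L lam + coefB \<sigma> d L lam + coefC \<sigma> L lam
    = lam / L^2 * (lam * c3 \<sigma> d L - L * (2 * c2 \<sigma> d 4 + (L-1) * c1 \<sigma> 4))"
  unfolding coefA_def coefB_def coefC_def c3_def using assms
  by (simp add: field_simps power2_eq_square)

lemma coef_sum_nonpos:
  assumes "0 \<le> d" "2 \<le> L" "0 < lam" "lam \<le> lambda_star \<sigma> d L"
  shows "2*coefA \<sigma> d L lam + coefB \<sigma> d L lam + coefC \<sigma> L lam \<le> 0"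
proof -
  have "lam * c3 \<sigma> d L \<le> L * (2 * c2 \<sigma> d 4 + (L-1) * c1 \<sigma> 4)"
    using assms(4) c3_pos[OF assms(1,2)]
    unfolding lambda_star_def by (simp add: le_divide_eq algebra_simps)
  moreover have "L \<noteq> 0" using assms(2) by simp
  ultimately show ?thesis
    unfolding coef_sum_eq[OF \<open>L \<noteq> 0\<close>] using assms(3)
    by (intro mult_nonneg_nonpos divide_nonneg_nonneg) auto
qed

theorem proposition12:
  fixes d L :: nat and \<sigma> lam D k0 k1 :: real
  assumes "d \<ge> 2" and "L \<ge> 2" and "\<sigma> > 0"
    and "0 < lam" and "lam \<le> lambda_star \<sigma> (real d) (real L)"
    and "k0 \<in> {-1..1}" and "k1 \<in> {-1..1}"
    and "(1 - k0^2) * deriv (\<lambda>x. Rlt \<sigma> (real d) (real L) lam D x k1) k0 = 0"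
    and "(1 - k1^2) * deriv (\<lambda>y. Rlt \<sigma> (real d) (real L) lam D k0 y) k1 = 0"
  shows "(k0, k1) \<in> {(1,1), (1,-1), (-1,1), (-1,-1), (0,1), (0,-1), (1,0), (-1,0), (0,0)}"
proof -
  have d: "0 \<le> real d" and L: "2 \<le> real L" using assms(2) by simp_all
  note A = coefA_pos[OF d L, of lam \<sigma>] and C = coefC_nonneg[of "real L" \<sigma> lam]
  note S = coef_sum_nonpos[OF d L assms(4,5)]
  have "\<bar>k0\<bar> \<le> 1" "\<bar>k1\<bar> \<le> 1" using assms(6,7) by auto
  then have "k0 \<in> {-1, 0, 1}" "k1 \<in> {-1, 0, 1}"
    using quartic_critical_coordinate[OF A C S] assms(4,8,9) L
    by (simp_all add: deriv_Rlt_fst deriv_Rlt_snd)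
  then show ?thesis by auto
qed

end
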